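(* Let $(E,\mathcal L)$ be a simple affine oriented matroid satisfying (S): $|S(X,Y)|<\infty$ for all $X,Y\in\mathcal L$. Let $\pi$ be a parallelism class with its total order $<_\pi$. Then $(\pi,<_\pi)$ or its reverse is order isomorphic to exactly one of: $(\mathbb Z,<)$ (if $\pi$ has neither a minimum nor a maximum), $(\mathbb N,<)$ (if exactly one extremum exists, the order being reversed if necessary so that it is a minimum), or $\{0,1,\dots,|\pi|-1\}$ (if both a minimum and a maximum exist; then $\pi$ is finite).
   Context: A sign vector on a set $E$ is an element of $\{+,-,0\}^E$; $-X$ is defined by $(-X)(e)=-X(e)$. The separator of $X,Y$ is $S(X,Y)=\{e\in E: X(e)\neq0\neq Y(e),\ X(e)\neq Y(e)\}$. The composition $X\circ Y$ is given by $(X\circ Y)(e)=X(e)$ if $X(e)\neq0$ and $Y(e)$ otherwise; $X\oplus Y$ is $0$ on $S(X,Y)$ and equals $X\circ Y$ elsewhere. For sets of sign vectors, $\mathcal A\circ\mathcal B=\{X\circ Y:X\in\mathcal A,Y\in\mathcal B\}$, $-\mathcal A=\{-X:X\in\mathcal A\}$. For $\mathcal L\subseteq\{+,-,0\}^E$ let $I_e(X,Y;\mathcal L)=\{Z\in\mathcal L:Z(e)=0,\ Z(f)=(X\circ Y)(f)\ \forall f\notin S(X,Y)\}$, $I(X,Y;\mathcal L)=\bigcup_{e\in S(X,Y)}I_e(X,Y;\mathcal L)$ and $\mathcal P(\mathcal L)=\{X\oplus(-Y):X,Y\in\mathcal L,\ I(X,-Y;\mathcal L)=I(-X,Y;\mathcal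 L)=\emptyset\}$. An affine oriented matroid (AOM) on an arbitrary set $E$ is a pair $(E,\mathcal L)$, $\mathcal L\subseteq\{+,-,0\}^E$, satisfying (FS) $\mathcal L\circ(-\mathcal L)\subseteq\mathcal L$; (SE) for all $X,Y\in\mathcal L$ and $e\in S(X,Y)$, $I_e(X,Y;\mathcal L)\ne\emptyset$; (P) $\mathcal P(\mathcal L)\circ\mathcal L\subseteq\mathcal L$. Elements $e,f\in E$ are equivalent if $X(e)=X(f)$ for all $X\in\mathcal L$, or $X(e)=-X(f)$ for all $X\in\mathcal L$; $e$ is redundant if $X(e)=Y(e)$ for all $X,Y\in\mathcal L$. The AOM is simple if it has no redundant elements and no two distinct equivalent elements. Two elements $e,f$ are parallel, $e\parallel f$, if there is no $X\in\mathcal L$ with $X(e)=X(f)=0$; in a simple AOM the reflexive closure of $\parallel$ is an equivalence relation whose classes are the parallelism classes. On a parallelism class $\pi$ the relation $[a,b,c]$ holds iff $a,b,c$ are pairwise distinct and for all $X,Z\in\mathcal L$, $X(a)=0$ and $Z(c)=0$ imply $X(b)=-Z(b)$; $<_\pi$ is the total order on $\pi$ (unique up to reversal) such that $[a,b,c]$ iff $a<_\pi b<_\pi c$ or $c<_\pi b<_\pi a$. *)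

theory Defs
  imports Main
begin

text \<open>Sign vectors on a ground set E; the ground set is modelled by the type 'e
  (E = UNIV), so a sign vector is a function 'e \<Rightarrow> sign.\<close>

datatype sign = Pos | Neg | Zero

fun sneg :: "sign \<Rightarrow> sign" where
  "sneg Pos = Neg" | "sneg Neg = Pos" | "sneg Zero = Zero"

type_synonym 'e svec = "'e \<Rightarrow> sign"

definition vneg :: "'e svec \<Rightarrow> 'e svec" where
  "vneg X = (\<lambda>e. sneg (X e))"

definition sep :: "'e svec \<Rightarrow> 'e svec \<Rightarrow> 'e set" where
  "sep X Y = {e. X e \<noteq> Zero \<and> Y e \<noteq> Zero \<and> X e \<noteq> Y e}"

definition comp :: "'e svec \<Rightarrow> 'e svec \<Rightarrow> 'e svec" where
  "comp X Y = (\<lambda>e. if X e \<noteq> Zero then X e else Y e)"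

definition oplus :: "'e svec \<Rightarrow> 'e svec \<Rightarrow> 'e svec" where
  "oplus X Y = (\<lambda>e. if e \<in> sep X Y then Zero else comp X Y e)"

definition I_e :: "'e svec \<Rightarrow> 'e svec \<Rightarrow> 'e svec set \<Rightarrow> 'e \<Rightarrow> 'e svec set" where
  "I_e X Y L e = {Z \<in> L. Z e = Zero \<and> (\<forall>f. f \<notin> sep X Y \<longrightarrow> Z f = comp X Y f)}"

definition I_all :: "'e svec \<Rightarrow> 'e svec \<Rightarrow> 'e svec set \<Rightarrow> 'e svec set" where
  "I_all X Y L = (\<Union>e\<in>sep X Y. I_e X Y L e)"

definition P_set :: "'e svec set \<Rightarrow> 'e svec set" where
  "P_set L = {oplus X (vneg Y) | X Y. X \<in> L \<and> Y \<in> L \<and>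
                 I_all X (vneg Y) L = {} \<and> I_all (vneg X) Y L = {}}"

definition AOM :: "'e svec set \<Rightarrow> bool" where
  "AOM L \<longleftrightarrow>
     (\<forall>X\<in>L. \<forall>Y\<in>L. comp X (vneg Y) \<in> L) \<and>
     (\<forall>X\<in>L. \<forall>Y\<in>L. \<forall>e\<in>sep X Y. I_e X Y L e \<noteq> {}) \<and>
     (\<forall>X\<in>P_set L. \<forall>Y\<in>L. comp X Y \<in> L)"

definition equivalent_elems :: "'e svec set \<Rightarrow> 'e \<Rightarrow> 'e \<Rightarrow> bool" where
  "equivalent_elems L e f \<longleftrightarrow>
     (\<forall>X\<in>L. X e = X f) \<or> (\<forall>X\<in>L. X e = sneg (X f))"

definition redundant :: "'e svec set \<Rightarrow> 'e \<Rightarrow> bool" where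
  "redundant L e \<longleftrightarrow> (\<forall>X\<in>L. \<forall>Y\<in>L. X e = Y e)"

definition simple :: "'e svec set \<Rightarrow> bool" where
  "simple L \<longleftrightarrow> (\<forall>e. \<not> redundant L e) \<and>
                 (\<forall>e f. e \<noteq> f \<longrightarrow> \<not> equivalent_elems L e f)"

definition parallel :: "'e svec set \<Rightarrow> 'e \<Rightarrow> 'e \<Rightarrow> bool" where
  "parallel L e f \<longleftrightarrow> \<not> (\<exists>X\<in>L. X e = Zero \<and> X f = Zero)"

definition par_class :: "'e svec set \<Rightarrow> 'e \<Rightarrow> 'e set" where
  "par_class L e = {f. f = e \<or> parallel L e f}"

definition between :: "'e svec set \<Rightarrow> 'e \<Rightarrow> 'e \<Rightarrow> 'e \<Rightarrow> bool" where
  "between L a b c \<longleftrightarrow> a \<noteq> b \<and> b \<noteq> c \<and> a \<noteq> c \<and>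
     (\<forall>X\<in>L. \<forall>Z\<in>L. X a = Zero \<longrightarrow> Z c = Zero \<longrightarrow> X b = sneg (Z b))"

definition strict_total_on :: "'e set \<Rightarrow> ('e \<Rightarrow> 'e \<Rightarrow> bool) \<Rightarrow> bool" where
  "strict_total_on A R \<longleftrightarrow>
     (\<forall>x\<in>A. \<not> R x x) \<and>
     (\<forall>x\<in>A. \<forall>y\<in>A. \<forall>z\<in>A. R x y \<longrightarrow> R y z \<longrightarrow> R x z) \<and>
     (\<forall>x\<in>A. \<forall>y\<in>A. x \<noteq> y \<longrightarrow> R x y \<or> R y x)"

text \<open>The order of a parallelism class: a strict total order whose betweenness is
  the relation [a,b,c] (unique up to reversal).\<close>
definition class_order :: "'e svec set \<Rightarrow> 'e set \<Rightarrow> ('e \<Rightarrow> 'e \<Rightarrow> bool) \<Rightarrow> bool" where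
  "class_order L A R \<longleftrightarrow> strict_total_on A R \<and>
     (\<forall>a\<in>A. \<forall>b\<in>A. \<forall>c\<in>A. between L a b c \<longleftrightarrow> (R a b \<and> R b c) \<or> (R c b \<and> R b a))"

definition has_min :: "'e set \<Rightarrow> ('e \<Rightarrow> 'e \<Rightarrow> bool) \<Rightarrow> bool" where
  "has_min A R \<longleftrightarrow> (\<exists>m\<in>A. \<forall>x\<in>A. x \<noteq> m \<longrightarrow> R m x)"

definition has_max :: "'e set \<Rightarrow> ('e \<Rightarrow> 'e \<Rightarrow> bool) \<Rightarrow> bool" where
  "has_max A R \<longleftrightarrow> (\<exists>m\<in>A. \<forall>x\<in>A. x \<noteq> m \<longrightarrow> R x m)"

definition order_iso :: "'e set \<Rightarrow> ('e \<Rightarrow> 'e \<Rightarrow> bool) \<Rightarrow> 'b::ord set \<Rightarrow> bool" where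
  "order_iso A R B \<longleftrightarrow> (\<exists>f. bij_betw f A B \<and> (\<forall>x\<in>A. \<forall>y\<in>A. R x y \<longleftrightarrow> f x < f y))"

end

theory Submission
  imports Defs
begin

text \<open>Take \<open>W, Z \<in> \<L>\<close> with \<open>W(e) = 0 = Z(b)\<close> (they exist by (SE), as no element is
  redundant). Every \<open>c\<close> strictly between \<open>e\<close> and \<open>b\<close> is parallel to \<open>e\<close>, so \<open>W(c) \<noteq> 0\<close>, and
  betweenness gives \<open>W(c) = -Z(c)\<close>; hence \<open>c \<in> S(W,Z)\<close>, which is finite by (S). So every
  interval of \<open><\<^sub>\<pi>\<close> is finite. In a locally finite total order with a least element \<open>m\<close>, the number of
  predecessors is an order embedding into \<open>\<nat>\<close> whose image is downward closed; it is all
  of \<open>\<nat>\<close> if there is no maximum and \<open>{0..rank max}\<close> otherwise. Without extrema, the two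
  halves of the order on either side of a point are glued to give \<open>\<int>\<close>.\<close>

definition locally_finite_on :: "'a set \<Rightarrow> ('a \<Rightarrow> 'a \<Rightarrow> bool) \<Rightarrow> bool" where
  "locally_finite_on A R \<longleftrightarrow> (\<forall>a\<in>A. \<forall>b\<in>A. finite {c\<in>A. R a c \<and> R c b})"

definition rank_in :: "'a set \<Rightarrow> ('a \<Rightarrow> 'a \<Rightarrow> bool) \<Rightarrow> 'a \<Rightarrow> nat" where
  "rank_in A R x = card {c\<in>A. R c x}"

lemma strict_total_on_irrefl: "strict_total_on A R \<Longrightarrow> x \<in> A \<Longrightarrow> \<not> R x x"
  by (simp add: strict_total_on_def)

lemma strict_total_on_trans:
  "strict_total_on A R \<Longrightarrow> x \<in> A \<Longrightarrow> y \<in> A \<Longrightarrow> z \<in> A \<Longrightarrow> R x y \<Longrightarrow> R y z \<Longrightarrow> R x z"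
  unfolding strict_total_on_def by blast

lemma strict_total_on_total:
  "strict_total_on A R \<Longrightarrow> x \<in> A \<Longrightarrow> y \<in> A \<Longrightarrow> x \<noteq> y \<Longrightarrow> R x y \<or> R y x"
  unfolding strict_total_on_def by blast

lemma strict_total_on_subset: "strict_total_on A R \<Longrightarrow> B \<subseteq> A \<Longrightarrow> strict_total_on B R"
  unfolding strict_total_on_def by blast

lemma strict_total_on_converse: "strict_total_on A R \<Longrightarrow> strict_total_on A (\<lambda>x y. R y x)"
  unfolding strict_total_on_def by blast

lemma locally_finite_on_subset:
  assumes "locally_finite_on A R" and "B \<subseteq> A"
  shows "locally_finite_on B R"
  unfolding locally_finite_on_def
proof (intro ballI)
  fix a b assume "a \<in> B" "b \<in> B"
  then have "finite {c\<in>A. R a c \<and> R c b}"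
    using assms unfolding locally_finite_on_def by blast
  then show "finite {c\<in>B. R a c \<and> R c b}"
    by (rule finite_subset[rotated]) (use assms(2) in blast)
qed

lemma locally_finite_on_converse:
  "locally_finite_on A R \<Longrightarrow> locally_finite_on A (\<lambda>x y. R y x)"
  unfolding locally_finite_on_def by (simp add: conj_commute)

lemma has_min_converse: "has_min A (\<lambda>x y. R y x) = has_max A R"
  unfolding has_min_def has_max_def by simp

lemma has_max_converse: "has_max A (\<lambda>x y. R y x) = has_min A R"
  unfolding has_min_def has_max_def by simp

lemma order_isoI:
  fixes f :: "'a \<Rightarrow> 'b::linorder"
  assumes "strict_total_on A R" and "\<forall>x\<in>A. \<forall>y\<in>A. R x y \<longleftrightarrow> f x < f y" and "f ` A = B"
  shows "order_iso A R B"
proof -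
  have "inj_on f A"
    by (rule inj_onI) (metis assms(1,2) strict_total_on_total less_irrefl)
  then show ?thesis unfolding order_iso_def bij_betw_def using assms(2,3) by blast
qed

context
  fixes A :: "'a set" and R :: "'a \<Rightarrow> 'a \<Rightarrow> bool" and m :: 'a
  assumes sto: "strict_total_on A R" and lf: "locally_finite_on A R"
    and m: "m \<in> A" and m_least: "\<forall>x\<in>A. x \<noteq> m \<longrightarrow> R m x"
begin

lemma finite_lower_set: "x \<in> A \<Longrightarrow> finite {c\<in>A. R c x}"
proof -
  assume x: "x \<in> A"
  have "{c\<in>A. R c x} \<subseteq> insert m {c\<in>A. R m c \<and> R c x}"
    using m_least by auto
  moreover have "finite {c\<in>A. R m c \<and> R c x}"
    using lf m x unfolding locally_finite_on_def by blast
  ultimately show ?thesis by (meson finite_insert finite_subset)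
qed

lemma rank_in_less:
  assumes x: "x \<in> A" and y: "y \<in> A" and "R x y"
  shows "rank_in A R x < rank_in A R y"
proof -
  have "{c\<in>A. R c x} \<subset> {c\<in>A. R c y}"
    using assms strict_total_on_trans[OF sto _ x y] strict_total_on_irrefl[OF sto x] by blast
  then show ?thesis
    unfolding rank_in_def using psubset_card_mono finite_lower_set[OF y] by blast
qed

lemma rank_in_less_iff:
  assumes "x \<in> A" and "y \<in> A"
  shows "R x y \<longleftrightarrow> rank_in A R x < rank_in A R y"
  using rank_in_less[OF assms] rank_in_less[OF assms(2,1)] strict_total_on_total[OF sto assms]
  by (cases "x = y") auto

lemma inj_on_rank_in: "inj_on (rank_in A R) A"
proof (rule inj_onI)
  fix x y assume "x \<in> A" "y \<in> A" "rank_in A R x = rank_in A R y"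
  then show "x = y"
    using rank_in_less strict_total_on_total[OF sto] by (metis less_irrefl)
qed

lemma rank_in_least: "rank_in A R m = 0"
proof -
  have "\<not> R c m" if "c \<in> A" for c
    using that m m_least strict_total_on_irrefl[OF sto] strict_total_on_trans[OF sto that m that]
    by (cases "c = m") auto
  then have "{c\<in>A. R c m} = {}" by blast
  then show ?thesis by (simp only: rank_in_def card.empty)
qed

text \<open>Counting: the predecessors of \<open>x\<close> are mapped injectively into \<open>{..<rank x}\<close>,
  a set of the same size.\<close>
lemma rank_in_image_lower_set:
  assumes x: "x \<in> A"
  shows "rank_in A R ` {c\<in>A. R c x} = {..<rank_in A R x}"
proof (rule card_subset_eq)
  show "rank_in A R ` {c\<in>A. R c x} \<subseteq> {..<rank_in A R x}"
    using rank_in_less x by blast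
  have "inj_on (rank_in A R) {c\<in>A. R c x}"
    by (rule inj_on_subset[OF inj_on_rank_in]) blast
  then show "card (rank_in A R ` {c\<in>A. R c x}) = card {..<rank_in A R x}"
    by (simp add: card_image) (simp add: rank_in_def)
qed simp

lemma rank_in_image_downward_closed:
  assumes "x \<in> A" and "n \<le> rank_in A R x"
  shows "n \<in> rank_in A R ` A"
proof (cases "n = rank_in A R x")
  case False
  then have "n \<in> rank_in A R ` {c\<in>A. R c x}"
    using assms rank_in_image_lower_set by simp
  then show ?thesis by blast
qed (use assms in blast)

lemma rank_in_image_no_max:
  assumes "\<not> has_max A R"
  shows "rank_in A R ` A = UNIV"
proof -
  have "\<exists>x\<in>A. n \<le> rank_in A R x" for n
  proof (induction n)
    case 0
    then show ?case using m by blast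
  next
    case (Suc n)
    then obtain x where x: "x \<in> A" "n \<le> rank_in A R x" by blast
    then obtain y where "y \<in> A" "y \<noteq> x" "\<not> R y x"
      using assms unfolding has_max_def by blast
    then have "y \<in> A" "R x y" using strict_total_on_total[OF sto x(1)] by blast+
    then show ?case using rank_in_less[OF x(1)] x(2) by (meson Suc_leI le_less_trans)
  qed
  then show ?thesis using rank_in_image_downward_closed by blast
qed

lemma rank_in_image_max:
  assumes M: "M \<in> A" "\<forall>x\<in>A. x \<noteq> M \<longrightarrow> R x M"
  shows "rank_in A R ` A = {..rank_in A R M}"
proof -
  have "rank_in A R x \<le> rank_in A R M" if "x \<in> A" for x
    using that M rank_in_less[OF that M(1)] by (cases "x = M") auto
  then show ?thesis using rank_in_image_downward_closed[OF M(1)] by auto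
qed

lemma order_iso_rank_in: "order_iso A R (rank_in A R ` A)"
  unfolding order_iso_def bij_betw_def using inj_on_rank_in rank_in_less_iff by blast

end

lemma locally_finite_iso_nat:
  assumes "strict_total_on A R" "locally_finite_on A R" "has_min A R" "\<not> has_max A R"
  shows "order_iso A R (UNIV :: nat set)"
proof -
  obtain m where "m \<in> A" "\<forall>x\<in>A. x \<noteq> m \<longrightarrow> R m x"
    using assms(3) unfolding has_min_def by blast
  then show ?thesis
    using order_iso_rank_in rank_in_image_no_max assms by metis
qed

lemma locally_finite_iso_segment:
  assumes "strict_total_on A R" "locally_finite_on A R" "has_min A R" "has_max A R"
  shows "finite A \<and> order_iso A R {0..<card A}"
proof -
  obtain m where m: "m \<in> A" "\<forall>x\<in>A. x \<noteq> m \<longrightarrow> R m x"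
    using assms(3) unfolding has_min_def by blast
  obtain M where M: "M \<in> A" "\<forall>x\<in>A. x \<noteq> M \<longrightarrow> R x M"
    using assms(4) unfolding has_max_def by blast
  note inj = inj_on_rank_in[OF assms(1,2) m]
  have img: "rank_in A R ` A = {0..<Suc (rank_in A R M)}"
    using rank_in_image_max[OF assms(1,2) m M] by auto
  then have "finite A" using finite_imageD[OF _ inj] by simp
  moreover have "card A = Suc (rank_in A R M)"
    using card_image[OF inj] img by simp
  ultimately show ?thesis
    using order_iso_rank_in[OF assms(1,2) m] img by simp
qed

lemma upper_set_rank_in:
  assumes sto: "strict_total_on A R" and lf: "locally_finite_on A R" and e: "e \<in> A"
    and no_max: "\<not> has_max A R"
  defines "U \<equiv> {x\<in>A. \<not> R x e}"
  shows "rank_in U R ` U = UNIV" and "\<forall>x\<in>U. \<forall>y\<in>U. R x y \<longleftrightarrow> rank_in U R x < rank_in U R y"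
    and "rank_in U R e = 0"
proof -
  have U: "U \<subseteq> A" unfolding U_def by blast
  note sto_U = strict_total_on_subset[OF sto U] and lf_U = locally_finite_on_subset[OF lf U]
  have e_U: "e \<in> U" unfolding U_def using e strict_total_on_irrefl[OF sto e] by blast
  have e_least: "\<forall>x\<in>U. x \<noteq> e \<longrightarrow> R e x"
    unfolding U_def using strict_total_on_total[OF sto _ e] by blast
  have "\<not> has_max U R"
  proof
    assume "has_max U R"
    then obtain M where M: "M \<in> U" "\<forall>x\<in>U. x \<noteq> M \<longrightarrow> R x M"
      unfolding has_max_def by blast
    then have "M \<in> A" using U by blast
    then obtain y where y: "y \<in> A" "y \<noteq> M" "\<not> R y M"
      using no_max unfolding has_max_def by blast
    then have "R M y" using strict_total_on_total[OF sto \<open>M \<in> A\<close>] by blast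
    then have "\<not> R y e"
      using strict_total_on_trans[OF sto \<open>M \<in> A\<close> y(1) e] M(1) unfolding U_def by blast
    then show False using M(2) y unfolding U_def by blast
  qed
  then show "rank_in U R ` U = UNIV" using rank_in_image_no_max[OF sto_U lf_U e_U e_least] by blast
  show "\<forall>x\<in>U. \<forall>y\<in>U. R x y \<longleftrightarrow> rank_in U R x < rank_in U R y"
    using rank_in_less_iff[OF sto_U lf_U e_U e_least] by blast
  show "rank_in U R e = 0" using rank_in_least[OF sto_U lf_U e_U e_least] .
qed

lemma locally_finite_iso_int:
  assumes sto: "strict_total_on A R" and lf: "locally_finite_on A R" and e: "e \<in> A"
    and no_min: "\<not> has_min A R" and no_max: "\<not> has_max A R"
  shows "order_iso A R (UNIV :: int set)"
proof -
  define Up where "Up = {x\<in>A. \<not> R x e}"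
  define Down where "Down = {x\<in>A. \<not> R e x}"
  define up where "up = rank_in Up R"
  define down where "down = rank_in Down (\<lambda>x y. R y x)"
  note up = upper_set_rank_in[OF sto lf e no_max, folded Up_def up_def]
  note down = upper_set_rank_in[OF strict_total_on_converse[OF sto] locally_finite_on_converse[OF lf]
      e no_min[folded has_max_converse], folded Down_def down_def]
  define f where "f x = (if R x e then - int (down x) else int (up x))" for x
  have below_e: "x \<in> Down" "0 < down x" if "x \<in> A" "R x e" for x
  proof -
    show "x \<in> Down" using that strict_total_on_trans[OF sto e that(1) e] strict_total_on_irrefl[OF sto e]
      unfolding Down_def by blast
    then show "0 < down x" using down(2,3) Down_def e strict_total_on_irrefl[OF sto e] that by force
  qed
  have in_Up: "x \<in> Up" if "x \<in> A" "\<not> R x e" for x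
    using that unfolding Up_def by blast
  have "R x y \<longleftrightarrow> f x < f y" if x: "x \<in> A" and y: "y \<in> A" for x y
  proof (cases "R x e"; cases "R y e")
    assume "R x e" "R y e"
    then show ?thesis using down(2) below_e x y unfolding f_def by auto
  next
    assume "R x e" "\<not> R y e"
    moreover have "R x y"
      using calculation strict_total_on_total[OF sto y e] strict_total_on_trans[OF sto x e y] by blast
    ultimately show ?thesis using below_e x unfolding f_def by force
  next
    assume "\<not> R x e" "R y e"
    moreover have "\<not> R x y" using calculation strict_total_on_trans[OF sto x y e] by blast
    ultimately show ?thesis using below_e y unfolding f_def by force
  next
    assume "\<not> R x e" "\<not> R y e"
    then show ?thesis using up(2) in_Up x y unfolding f_def by auto
  qed
  moreover have "f ` A = UNIV"
  proof -
    have "k \<in> f ` A" for k :: int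
    proof (cases "k \<ge> 0")
      case True
      obtain x where "x \<in> Up" "up x = nat k" using up(1) by (metis UNIV_I imageE)
      then show ?thesis using True unfolding f_def Up_def by force
    next
      case False
      obtain x where x: "x \<in> Down" "down x = nat (- k)" using down(1) by (metis UNIV_I imageE)
      then have "x \<noteq> e" using down(3) False by auto
      then have "R x e" using x(1) strict_total_on_total[OF sto _ e] unfolding Down_def by blast
      then show ?thesis using x False unfolding f_def Down_def by force
    qed
    then show ?thesis by blast
  qed
  ultimately show ?thesis using order_isoI[OF sto] by blast
qed

lemma AOM_zero_at_nonredundant:
  assumes "AOM L" and "\<not> redundant L a"
  shows "\<exists>X\<in>L. X a = Zero"
proof -
  obtain X Y where XY: "X \<in> L" "Y \<in> L" "X a \<noteq> Y a"
    using assms(2) unfolding redundant_def by blast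
  show ?thesis
  proof (cases "X a = Zero \<or> Y a = Zero")
    case False
    then have "a \<in> sep X Y" using XY unfolding sep_def by blast
    then have "I_e X Y L a \<noteq> {}" using assms(1) XY unfolding AOM_def by blast
    then show ?thesis unfolding I_e_def by blast
  qed (use XY in blast)
qed

lemma finite_between_parallel:
  assumes "AOM L" and "\<forall>X\<in>L. \<forall>Y\<in>L. finite (sep X Y)"
    and "\<not> redundant L a" and "\<not> redundant L b"
  shows "finite {c. parallel L a c \<and> between L a c b}"
proof -
  obtain X Z where XZ: "X \<in> L" "X a = Zero" "Z \<in> L" "Z b = Zero"
    using AOM_zero_at_nonredundant assms(1,3,4) by metis
  have "{c. parallel L a c \<and> between L a c b} \<subseteq> sep X Z"
  proof
    fix c assume c: "c \<in> {c. parallel L a c \<and> between L a c b}"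
    then have "X c \<noteq> Zero" using XZ unfolding parallel_def by blast
    moreover have "X c = sneg (Z c)" using c XZ unfolding between_def by blast
    ultimately show "c \<in> sep X Z" unfolding sep_def by (cases "Z c") auto
  qed
  then show ?thesis using assms(2) XZ finite_subset by blast
qed

text \<open>An interval \<open>(a, b)\<close> lies in \<open>{e} \<union> (e, a) \<union> (e, b)\<close>, and only intervals with endpoint
  \<open>e\<close> are controlled by separators, since only their points are known to be parallel to
  an endpoint.\<close>
lemma locally_finite_par_class:
  assumes "AOM L" and "simple L" and "\<forall>X\<in>L. \<forall>Y\<in>L. finite (sep X Y)"
    and "class_order L (par_class L e) R"
  shows "locally_finite_on (par_class L e) R"
  unfolding locally_finite_on_def
proof (intro ballI)
  let ?A = "par_class L e"
  let ?B = "\<lambda>b. {c. parallel L e c \<and> between L e c b}"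
  have sto: "strict_total_on ?A R" and btw: "\<forall>a\<in>?A. \<forall>b\<in>?A. \<forall>c\<in>?A.
      between L a b c \<longleftrightarrow> (R a b \<and> R b c) \<or> (R c b \<and> R b a)"
    using assms(4) unfolding class_order_def by blast+
  have e: "e \<in> ?A" unfolding par_class_def by blast
  fix a b assume a: "a \<in> ?A" and b: "b \<in> ?A"
  have "{c\<in>?A. R a c \<and> R c b} \<subseteq> insert e (?B a \<union> ?B b)"
  proof
    fix c assume "c \<in> {c\<in>?A. R a c \<and> R c b}"
    then have c: "c \<in> ?A" "R a c" "R c b" by auto
    show "c \<in> insert e (?B a \<union> ?B b)"
    proof (cases "c = e")
      case False
      then have "parallel L e c" using c(1) unfolding par_class_def by blast
      moreover have "R e c \<or> R c e" using strict_total_on_total[OF sto c(1) e] False by blast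
      ultimately show ?thesis using btw a b c e by blast
    qed simp
  qed
  moreover have "finite (?B a)" "finite (?B b)"
    using finite_between_parallel[OF assms(1,3)] assms(2) unfolding simple_def by blast+
  ultimately show "finite {c\<in>?A. R a c \<and> R c b}" by (meson finite_Un finite_insert finite_subset)
qed

theorem lemma3p13:
  fixes L :: "'e svec set" and e :: 'e and R :: "'e \<Rightarrow> 'e \<Rightarrow> bool"
  assumes "AOM L" and "simple L"
    and "\<forall>X\<in>L. \<forall>Y\<in>L. finite (sep X Y)"
    and "class_order L (par_class L e) R"
  shows "(\<not> has_min (par_class L e) R \<and> \<not> has_max (par_class L e) R \<longrightarrow>
            order_iso (par_class L e) R (UNIV :: int set) \<or>
            order_iso (par_class L e) (\<lambda>x y. R y x) (UNIV :: int set))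
       \<and> (has_min (par_class L e) R \<and> \<not> has_max (par_class L e) R \<longrightarrow>
            order_iso (par_class L e) R (UNIV :: nat set))
       \<and> (\<not> has_min (par_class L e) R \<and> has_max (par_class L e) R \<longrightarrow>
            order_iso (par_class L e) (\<lambda>x y. R y x) (UNIV :: nat set))
       \<and> (has_min (par_class L e) R \<and> has_max (par_class L e) R \<longrightarrow>
            finite (par_class L e) \<and>
            (order_iso (par_class L e) R {0..<card (par_class L e)} \<or>
             order_iso (par_class L e) (\<lambda>x y. R y x) {0..<card (par_class L e)}))"
proof -
  let ?A = "par_class L e"
  have sto: "strict_total_on ?A R" using assms(4) unfolding class_order_def by blast
  have lf: "locally_finite_on ?A R" using locally_finite_par_class[OF assms] .
  have e: "e \<in> ?A" unfolding par_class_def by blast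
  note sto' = strict_total_on_converse[OF sto] and lf' = locally_finite_on_converse[OF lf]
  show ?thesis
  proof (intro conjI impI)
    assume "\<not> has_min ?A R \<and> \<not> has_max ?A R"
    then show "order_iso ?A R (UNIV :: int set) \<or> order_iso ?A (\<lambda>x y. R y x) (UNIV :: int set)"
      using locally_finite_iso_int[OF sto lf e] by blast
  next
    assume "has_min ?A R \<and> \<not> has_max ?A R"
    then show "order_iso ?A R (UNIV :: nat set)" using locally_finite_iso_nat[OF sto lf] by blast
  next
    assume "\<not> has_min ?A R \<and> has_max ?A R"
    then show "order_iso ?A (\<lambda>x y. R y x) (UNIV :: nat set)"
      using locally_finite_iso_nat[OF sto' lf'] has_min_converse[of ?A R] has_max_converse[of ?A R]
      by blast
  next
    assume "has_min ?A R \<and> has_max ?A R"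
    then show "finite ?A" and "order_iso ?A R {0..<card ?A} \<or> order_iso ?A (\<lambda>x y. R y x) {0..<card ?A}"
      using locally_finite_iso_segment[OF sto lf] by blast+
  qed
qed

end
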